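(* Let $P$ be a finite poset. If $\mathcal{J}$ is a poset ideal in $\mathrm{Hom}(P,\mathbb{N})$, then $\overline{\Lambda}\mathcal{J}=\{\overline{\Lambda}\phi:\phi\in\mathcal{J}\}$ is a poset ideal in $\mathbb{N}P$, i.e. every monomial dividing a monomial in $\overline{\Lambda}\mathcal{J}$ lies in $\overline{\Lambda}\mathcal{J}$.
   Context: $\mathbb{N}=\{0,1,\dots\}$; $\mathrm{Hom}(P,\mathbb{N})$ is the set of isotone maps $P\to\mathbb{N}$ ordered pointwise; a poset ideal is a down-closed subset. $\mathbb{N}P$ is the monoid of formal sums $\sum_{p\in P}n_pp$, $n_p\in\mathbb{N}$, ordered componentwise, identified with the monomials of $k[x_P]$ ($k$ a field) ordered by divisibility. The ascent is $\Lambda\phi=\{(p,i):\phi(q)\le i<\phi(p)\ \forall q<p\}$ and $\overline{\Lambda}\phi=\sum_{(p,i)\in\Lambda\phi}p\in\mathbb{N}P$, i.e. the monomial $\prod_{(p,i)\in\Lambda\phi}x_p$. *)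

theory Defs
  imports Main "HOL-Library.Multiset"
begin

text \<open>A finite poset is represented by a finite carrier set P inside an ordered type.
  Hom(P,N): isotone maps P \<rightarrow> N, represented extensionally (value 0 outside P).\<close>
definition hom_poset :: "'a::order set \<Rightarrow> ('a \<Rightarrow> nat) set" where
  "hom_poset P = {\<phi>. (\<forall>p\<in>P. \<forall>q\<in>P. p \<le> q \<longrightarrow> \<phi> p \<le> \<phi> q) \<and> (\<forall>x. x \<notin> P \<longrightarrow> \<phi> x = 0)}"

definition hom_le :: "'a::order set \<Rightarrow> ('a \<Rightarrow> nat) \<Rightarrow> ('a \<Rightarrow> nat) \<Rightarrow> bool" where
  "hom_le P \<psi> \<phi> \<longleftrightarrow> (\<forall>p\<in>P. \<psi> p \<le> \<phi> p)"

definition hom_ideal :: "'a::order set \<Rightarrow> ('a \<Rightarrow> nat) set \<Rightarrow> bool" where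
  "hom_ideal P J \<longleftrightarrow> J \<subseteq> hom_poset P \<and>
     (\<forall>\<phi>\<in>J. \<forall>\<psi>\<in>hom_poset P. hom_le P \<psi> \<phi> \<longrightarrow> \<psi> \<in> J)"

definition ascent :: "'a::order set \<Rightarrow> ('a \<Rightarrow> nat) \<Rightarrow> ('a \<times> nat) set" where
  "ascent P \<phi> = {(p, i). p \<in> P \<and> (\<forall>q\<in>P. q < p \<longrightarrow> \<phi> q \<le> i) \<and> i < \<phi> p}"

definition ascent_bar :: "'a::order set \<Rightarrow> ('a \<Rightarrow> nat) \<Rightarrow> 'a multiset" where
  "ascent_bar P \<phi> = (\<Sum>(p, i)\<in>ascent P \<phi>. {#p#})"

text \<open>NP: multisets supported on P, ordered by sub-multiset (divisibility of monomials).\<close>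
definition NP :: "'a set \<Rightarrow> 'a multiset set" where
  "NP P = {m. set_mset m \<subseteq> P}"

definition NP_ideal :: "'a set \<Rightarrow> 'a multiset set \<Rightarrow> bool" where
  "NP_ideal P I \<longleftrightarrow> I \<subseteq> NP P \<and> (\<forall>M\<in>I. \<forall>m. m \<subseteq># M \<longrightarrow> m \<in> I)"

end

theory Submission
  imports Defs
begin

text \<open>The multiplicity of p in \<open>ascent_bar P \<phi>\<close> is the jump of \<open>\<phi>\<close> at p over the
  maximum of \<open>\<phi>\<close> strictly below p. Given \<open>m \<subseteq># ascent_bar P \<phi>\<close>, let \<open>\<psi> p\<close> be the largest
  \<open>count m\<close>-weight of a chain below p. Then \<open>\<psi>\<close> is isotone and satisfies
  \<open>\<psi> p = count m p + max {\<psi> q. q < p}\<close>, so its jumps are exactly \<open>count m\<close>; comparing this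
  recursion with the jumps of \<open>\<phi>\<close> gives \<open>\<psi> \<le> \<phi>\<close> by induction over P. As J is down-closed,
  \<open>\<psi> \<in> J\<close>, and \<open>m = ascent_bar P \<psi>\<close>.\<close>

definition max_below :: "'a::order set \<Rightarrow> ('a \<Rightarrow> nat) \<Rightarrow> 'a \<Rightarrow> nat" where
  "max_below P \<phi> p = Max (insert 0 (\<phi> ` {q\<in>P. q < p}))"

lemma max_below_ge: "finite P \<Longrightarrow> q \<in> P \<Longrightarrow> q < p \<Longrightarrow> \<phi> q \<le> max_below P \<phi> p"
  unfolding max_below_def by (intro Max_ge) auto

lemma max_below_le_iff:
  "finite P \<Longrightarrow> max_below P \<phi> p \<le> i \<longleftrightarrow> (\<forall>q\<in>P. q < p \<longrightarrow> \<phi> q \<le> i)"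
  unfolding max_below_def by (subst Max_le_iff) auto

lemma max_below_cases:
  assumes "finite P"
  obtains "max_below P \<phi> p = 0" | q where "q \<in> P" "q < p" "max_below P \<phi> p = \<phi> q"
proof -
  have "max_below P \<phi> p \<in> insert 0 (\<phi> ` {q\<in>P. q < p})"
    unfolding max_below_def using assms by (intro Max_in) auto
  then show ?thesis using that by auto
qed

lemma max_below_mono:
  "finite P \<Longrightarrow> (\<And>q. q \<in> P \<Longrightarrow> q < p \<Longrightarrow> \<psi> q \<le> \<phi> q) \<Longrightarrow> max_below P \<psi> p \<le> max_below P \<phi> p"
  by (auto simp: max_below_le_iff intro: order_trans max_below_ge)

lemma max_below_le_hom:
  "finite P \<Longrightarrow> \<phi> \<in> hom_poset P \<Longrightarrow> p \<in> P \<Longrightarrow> max_below P \<phi> p \<le> \<phi> p"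
  by (auto simp: max_below_le_iff hom_poset_def less_imp_le)

lemma finite_ascent: "finite P \<Longrightarrow> finite (ascent P \<phi>)"
  by (rule finite_subset[of _ "Sigma P (\<lambda>p. {..<\<phi> p})"]) (auto simp: ascent_def)

lemma count_ascent_bar:
  assumes "finite P"
  shows "count (ascent_bar P \<phi>) p = (if p \<in> P then \<phi> p - max_below P \<phi> p else 0)"
proof -
  have "count (ascent_bar P \<phi>) p = (\<Sum>x\<in>ascent P \<phi>. if fst x = p then 1 else 0)"
    unfolding ascent_bar_def count_sum by (rule sum.cong) auto
  also have "\<dots> = card {x\<in>ascent P \<phi>. fst x = p}"
    using finite_ascent[OF assms] by (simp add: sum.If_cases Int_def)
  also have "{x\<in>ascent P \<phi>. fst x = p} =
      Pair p ` (if p \<in> P then {max_below P \<phi> p..<\<phi> p} else {})"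
    using max_below_le_iff[OF assms, of \<phi> p] by (auto simp: ascent_def image_iff)
  also have "card \<dots> = (if p \<in> P then \<phi> p - max_below P \<phi> p else 0)"
    by (simp add: card_image inj_on_def)
  finally show ?thesis .
qed

lemma ascent_bar_in_NP: "finite P \<Longrightarrow> ascent_bar P \<phi> \<in> NP P"
  by (auto simp: NP_def count_ascent_bar simp flip: count_greater_zero_iff split: if_splits)

lemma finite_poset_induct [consumes 2, case_names less]:
  fixes P :: "'a::order set"
  assumes "finite P" "p \<in> P"
    and step: "\<And>p. p \<in> P \<Longrightarrow> (\<And>q. q \<in> P \<Longrightarrow> q < p \<Longrightarrow> R q) \<Longrightarrow> R p"
  shows "R p"
  using assms(2)
proof (induction "card {q\<in>P. q < p}" arbitrary: p rule: less_induct)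
  case less
  show ?case
  proof (rule step[OF less.prems])
    fix q assume "q \<in> P" "q < p"
    then have "{r\<in>P. r < q} \<subset> {r\<in>P. r < p}" by auto
    then have "card {r\<in>P. r < q} < card {r\<in>P. r < p}"
      using assms(1) by (intro psubset_card_mono) auto
    then show "R q" using less.hyps \<open>q \<in> P\<close> by blast
  qed
qed

lemma finite_chain_has_greatest:
  fixes C :: "'a::order set"
  assumes "finite C" "C \<noteq> {}" "Complete_Partial_Order.chain (\<le>) C"
  obtains z where "z \<in> C" "\<And>a. a \<in> C \<Longrightarrow> a \<le> z"
  using finite_has_maximal[OF assms(1,2)] assms(3) that
  by (metis chain_def)

definition chains_below :: "'a::order set \<Rightarrow> 'a \<Rightarrow> 'a set set" where
  "chains_below P y = {C. C \<subseteq> {q\<in>P. q \<le> y} \<and> Complete_Partial_Order.chain (\<le>) C}"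

definition heaviest_chain :: "'a::order set \<Rightarrow> ('a \<Rightarrow> nat) \<Rightarrow> 'a \<Rightarrow> nat" where
  "heaviest_chain P c y = (if y \<in> P then Max (sum c ` chains_below P y) else 0)"

lemma finite_chains_below: "finite P \<Longrightarrow> finite (chains_below P y)"
  unfolding chains_below_def by (rule finite_subset[of _ "Pow P"]) auto

lemma empty_in_chains_below: "{} \<in> chains_below P y"
  by (simp add: chains_below_def chain_def)

lemma sum_le_heaviest_chain:
  "finite P \<Longrightarrow> y \<in> P \<Longrightarrow> C \<in> chains_below P y \<Longrightarrow> sum c C \<le> heaviest_chain P c y"
  unfolding heaviest_chain_def using finite_chains_below by (auto intro: Max_ge)

lemma heaviest_chain_attained:
  assumes "finite P" "y \<in> P"
  obtains C where "C \<in> chains_below P y" "heaviest_chain P c y = sum c C"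
proof -
  have "Max (sum c ` chains_below P y) \<in> sum c ` chains_below P y"
    using finite_chains_below[OF assms(1)] empty_in_chains_below by (intro Max_in) auto
  then show ?thesis using that assms(2) unfolding heaviest_chain_def by auto
qed

lemma heaviest_chain_hom: "finite P \<Longrightarrow> heaviest_chain P c \<in> hom_poset P"
  unfolding hom_poset_def
proof (intro CollectI conjI ballI allI impI)
  fix x y assume "finite P" "x \<in> P" "y \<in> P" "x \<le> y"
  moreover have "chains_below P x \<subseteq> chains_below P y"
    using \<open>x \<le> y\<close> by (auto simp: chains_below_def intro: order_trans)
  ultimately show "heaviest_chain P c x \<le> heaviest_chain P c y"
    by (metis heaviest_chain_attained subsetD sum_le_heaviest_chain)
qed (simp add: heaviest_chain_def)

lemma heaviest_chain_ge_step:
  assumes "finite P" "p \<in> P"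
  shows "c p + max_below P (heaviest_chain P c) p \<le> heaviest_chain P c p"
  using assms(1)
proof (cases rule: max_below_cases[where \<phi> = "heaviest_chain P c" and p = p])
  case 1
  have "{p} \<in> chains_below P p"
    using assms(2) by (simp add: chains_below_def chain_def)
  then show ?thesis using 1 sum_le_heaviest_chain[OF assms, of "{p}" c] by simp
next
  case (2 q)
  then obtain C where C: "C \<in> chains_below P q" "heaviest_chain P c q = sum c C"
    using heaviest_chain_attained[OF assms(1)] by blast
  then have "C \<subseteq> P" "\<forall>a\<in>C. a < p" "finite C"
    using 2 assms(1) by (auto simp: chains_below_def intro: le_less_trans finite_subset)
  moreover have "insert p C \<in> chains_below P p"
    using C(1) \<open>\<forall>a\<in>C. a < p\<close> assms(2) by (auto simp: chains_below_def chain_def less_imp_le)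
  ultimately show ?thesis
    using sum_le_heaviest_chain[OF assms, of "insert p C" c] 2(3) C(2) by auto
qed

lemma heaviest_chain_le_step:
  assumes "finite P" "p \<in> P"
  shows "heaviest_chain P c p \<le> c p + max_below P (heaviest_chain P c) p"
proof -
  obtain C where C: "C \<in> chains_below P p" "heaviest_chain P c p = sum c C"
    using heaviest_chain_attained[OF assms] by blast
  have sub: "C \<subseteq> P" "\<forall>a\<in>C. a \<le> p" and ch: "Complete_Partial_Order.chain (\<le>) (C - {p})"
    using C(1) by (auto simp: chains_below_def chain_def)
  have fin: "finite (C - {p})" using sub(1) assms(1) finite_subset by blast
  have "sum c C \<le> c p + sum c (C - {p})"
    using fin by (cases "p \<in> C") (simp_all add: sum.remove)
  moreover have "sum c (C - {p}) \<le> max_below P (heaviest_chain P c) p"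
  proof (cases "C - {p} = {}")
    case False
    then obtain z where z: "z \<in> C - {p}" "\<And>a. a \<in> C - {p} \<Longrightarrow> a \<le> z"
      using finite_chain_has_greatest[OF fin _ ch] by blast
    then have "z \<in> P" "z < p" using sub by (auto simp: less_le)
    moreover have "C - {p} \<in> chains_below P z"
      using z sub ch by (auto simp: chains_below_def)
    ultimately show ?thesis
      using sum_le_heaviest_chain[OF assms(1)] max_below_ge[OF assms(1)] order_trans by blast
  qed (simp only: sum.empty zero_le)
  ultimately show ?thesis using C(2) by simp
qed

lemma heaviest_chain_step:
  "finite P \<Longrightarrow> p \<in> P \<Longrightarrow> heaviest_chain P c p = c p + max_below P (heaviest_chain P c) p"
  using heaviest_chain_ge_step heaviest_chain_le_step by (metis antisym)

lemma heaviest_chain_le_hom: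
  assumes "finite P" "\<phi> \<in> hom_poset P" "p \<in> P"
    and jumps: "\<And>q. q \<in> P \<Longrightarrow> c q \<le> \<phi> q - max_below P \<phi> q"
  shows "heaviest_chain P c p \<le> \<phi> p"
  using assms(1,3)
proof (induction p rule: finite_poset_induct)
  case (less p)
  have "heaviest_chain P c p = c p + max_below P (heaviest_chain P c) p"
    using heaviest_chain_step[OF assms(1) less(1)] .
  also have "\<dots> \<le> (\<phi> p - max_below P \<phi> p) + max_below P \<phi> p"
    using jumps[OF less(1)] max_below_mono[OF assms(1), of p "heaviest_chain P c" \<phi>] less(2)
    by (intro add_mono) auto
  also have "\<dots> = \<phi> p"
    using max_below_le_hom[OF assms(1,2) less(1)] by simp
  finally show ?case .
qed

lemma submset_ascent_bar_eq_ascent_bar: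
  assumes "finite P" "\<phi> \<in> hom_poset P" "m \<subseteq># ascent_bar P \<phi>"
  shows "\<exists>\<psi>\<in>hom_poset P. hom_le P \<psi> \<phi> \<and> ascent_bar P \<psi> = m"
proof (intro bexI conjI)
  let ?\<psi> = "heaviest_chain P (count m)"
  have jumps: "count m q \<le> (if q \<in> P then \<phi> q - max_below P \<phi> q else 0)" for q
    using mset_subset_eq_count[OF assms(3), of q] count_ascent_bar[OF assms(1)] by simp
  show "?\<psi> \<in> hom_poset P" using heaviest_chain_hom[OF assms(1)] .
  show "hom_le P ?\<psi> \<phi>"
    unfolding hom_le_def using heaviest_chain_le_hom[OF assms(1,2)] jumps by (metis (full_types))
  show "ascent_bar P ?\<psi> = m"
  proof (rule multiset_eqI)
    fix p
    show "count (ascent_bar P ?\<psi>) p = count m p"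
      using jumps[of p]
      by (cases "p \<in> P") (simp_all add: count_ascent_bar[OF assms(1)] heaviest_chain_step[OF assms(1)])
  qed
qed

theorem proposition3p4:
  fixes P :: "'a::order set" and J :: "('a \<Rightarrow> nat) set"
  assumes "finite P"
    and "hom_ideal P J"
  shows "NP_ideal P (ascent_bar P ` J)"
  unfolding NP_ideal_def
proof (intro conjI ballI allI impI)
  show "ascent_bar P ` J \<subseteq> NP P"
    using ascent_bar_in_NP[OF assms(1)] by blast
next
  fix M m assume "M \<in> ascent_bar P ` J" "m \<subseteq># M"
  then obtain \<phi> where "\<phi> \<in> J" "m \<subseteq># ascent_bar P \<phi>" by blast
  moreover have "\<phi> \<in> hom_poset P" using \<open>\<phi> \<in> J\<close> assms(2) by (auto simp: hom_ideal_def)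
  ultimately obtain \<psi> where "\<psi> \<in> hom_poset P" "hom_le P \<psi> \<phi>" "ascent_bar P \<psi> = m"
    using submset_ascent_bar_eq_ascent_bar[OF assms(1)] by blast
  then show "m \<in> ascent_bar P ` J"
    using \<open>\<phi> \<in> J\<close> assms(2) unfolding hom_ideal_def by blast
qed

end
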